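(* Let $\mathbf p$ be a critical reproduction law with finite variance $\sigma^2$. Suppose that its tail distribution satisfies $\bar F(x)>0$ for all $x>0$ and $$\lim_{y\to\infty}\limsup_{x\to\infty}\frac{\bar F(xy)}{\bar F(x)}=0.$$ Then $$\mathbb{P}(X^\ast_1>x)\sim\sqrt{2\bar F(x)/\sigma^2}\qquad\text{as }x\to\infty.$$
   Context: $\mathbf p=(p(n))_{n\in\mathbb{N}}$ is a probability measure on the nonnegative integers with $\sum_n np(n)=1$ (criticality), $\mathbf p\ne\delta_1$, and variance $\sigma^2=\sum_n n^2p(n)-1<\infty$. For real $x$, $\bar F(x)=\sum_{n>x}p(n)$. Consider a Galton–Watson process with reproduction law $\mathbf p$ started from one ancestor; $T_1$ is its total population size (ancestor included), $X_1,\dots,X_{T_1}$ are the numbers of children of its individuals (in some arbitrary enumeration), and $X^\ast_1=\max\{X_i:1\le i\le T_1\}$. *)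

theory Defs
  imports "HOL-Analysis.Analysis" "HOL-Library.Landau_Symbols"
begin

datatype ptree = Node "ptree list"

text \<open>Probability that a Galton-Watson tree with reproduction law p equals the
  finite plane tree t: the product over all vertices u of p(number of children of u).\<close>
fun gw_weight :: "(nat \<Rightarrow> real) \<Rightarrow> ptree \<Rightarrow> real" where
  "gw_weight p (Node ts) = p (length ts) * prod_list (map (gw_weight p) ts)"

fun tsize :: "ptree \<Rightarrow> nat" where
  "tsize (Node ts) = Suc (sum_list (map tsize ts))"

fun maxdeg :: "ptree \<Rightarrow> nat" where
  "maxdeg (Node ts) = Max (insert (length ts) (set (map maxdeg ts)))"

definition Fbar :: "(nat \<Rightarrow> real) \<Rightarrow> real \<Rightarrow> real" where
  "Fbar p x = (\<Sum>n. if real n > x then p n else 0)"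

text \<open>P(X*_1 > x) for the GW tree started from one ancestor (the critical GW tree is
  a.s. finite, so its law is the measure on finite plane trees given by gw_weight).\<close>
definition max_offspring_tail :: "(nat \<Rightarrow> real) \<Rightarrow> real \<Rightarrow> real" where
  "max_offspring_tail p x = infsum (\<lambda>t. if real (maxdeg t) > x then gw_weight p t else 0) UNIV"

end

theory Submission
  imports Defs
begin

text \<open>
  Write \<open>Q(x) = P(X\<^sup>*\<^sub>1 > x)\<close> and \<open>f\<close> for the generating function of \<open>p\<close>.
  Removing every individual with more than \<open>x\<close> children turns the Galton-Watson tree into
  the one with the truncated law \<open>p\<^sub>n [n \<le> x]\<close>; the total mass \<open>1 - Q(x)\<close> of its law is
  a fixed point of the truncated generating function.  Criticality gives
  \<open>f(s) - s = (1 - s)\<^sup>2 \<Phi>(1 - s)\<close> with \<open>\<Phi>\<close> continuous, bounded away from 0 on \<open>[0, 1]\<close> and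
  \<open>\<Phi>(0) = \<sigma>\<^sup>2/2\<close> (so in particular the untruncated tree is a.s. finite), whence
  \<open>Q(x)\<^sup>2 \<Phi>(Q(x)) = \<Sum>\<^sub>n\<^sub>>\<^sub>x p\<^sub>n (1 - Q(x))\<^sup>n\<close>.
  The right-hand side is at most \<open>F(x)\<close>, which forces \<open>x Q(x) \<rightarrow> 0\<close> by finiteness of the
  variance; by Bernoulli's inequality it is at least \<open>(1 - x y Q(x)) (F(x) - F(x y))\<close>, and
  the tail hypothesis makes \<open>F(x y)\<close> negligible against \<open>F(x)\<close> for large \<open>y\<close>.
  Hence \<open>Q(x)\<^sup>2 \<sim> F(x) / \<Phi>(0) = 2 F(x) / \<sigma>\<^sup>2\<close>.
\<close>

section \<open>The law of the Galton-Watson tree\<close>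

fun children :: "ptree \<Rightarrow> ptree list" where
  "children (Node ts) = ts"

lemma Node_children [simp]: "Node (children t) = t"
  by (cases t) simp

lemma tsize_children_less: "t \<in> set (children u) \<Longrightarrow> tsize t < tsize u"
proof (cases u)
  case (Node ts)
  assume "t \<in> set (children u)"
  then have "tsize t \<le> sum_list (map tsize ts)"
    using Node by (intro member_le_sum_list) auto
  then show ?thesis using Node by simp
qed

lemma gw_weight_nonneg:
  assumes "\<And>n. 0 \<le> r n"
  shows "0 \<le> gw_weight r t"
proof (induction t)
  case (Node ts)
  then show ?case using assms by (auto intro!: mult_nonneg_nonneg prod_list_nonneg)
qed

lemma sum_prod_list_lists_length:
  assumes "finite A"
  shows "(\<Sum>ts\<in>{ts. set ts \<subseteq> A \<and> length ts = n}. prod_list (map w ts)) = (sum w A :: real) ^ n"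
proof (induction n)
  case 0
  have "{ts. set ts \<subseteq> A \<and> length ts = 0} = {[]}" by auto
  then show ?case by simp
next
  case (Suc n)
  let ?L = "{ts. set ts \<subseteq> A \<and> length ts = n}"
  have eq: "{ts. set ts \<subseteq> A \<and> length ts = Suc n} = (\<lambda>(t, ts). t # ts) ` (A \<times> ?L)"
    by (auto simp: length_Suc_conv image_iff)
  have inj: "inj_on (\<lambda>(t, ts). t # ts) (A \<times> ?L)"
    by (auto simp: inj_on_def)
  have "(\<Sum>ts\<in>{ts. set ts \<subseteq> A \<and> length ts = Suc n}. prod_list (map w ts))
      = (\<Sum>(t, ts)\<in>A \<times> ?L. w t * prod_list (map w ts))"
    unfolding eq by (subst sum.reindex[OF inj]) (simp add: case_prod_unfold)
  also have "\<dots> = (\<Sum>t\<in>A. \<Sum>ts\<in>?L. w t * prod_list (map w ts))"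
    by (rule sum.cartesian_product[symmetric])
  also have "\<dots> = sum w A * sum w A ^ n"
    by (simp add: sum_distrib_left[symmetric] Suc sum_distrib_right)
  finally show ?case by simp
qed

lemma sum_gw_weight_Node_lists:
  assumes "finite A"
  shows "sum (gw_weight r) (Node ` {ts. set ts \<subseteq> A \<and> length ts < N})
       = (\<Sum>n<N. r n * sum (gw_weight r) A ^ n)"
proof -
  let ?L = "\<lambda>n. {ts. set ts \<subseteq> A \<and> length ts = n}"
  have fin: "\<And>n. finite (?L n)"
    using finite_lists_length_eq[OF assms] by blast
  have U: "{ts. set ts \<subseteq> A \<and> length ts < N} = (\<Union>n\<in>{..<N}. ?L n)"
    by auto
  have "sum (gw_weight r) (Node ` {ts. set ts \<subseteq> A \<and> length ts < N})
      = (\<Sum>ts\<in>{ts. set ts \<subseteq> A \<and> length ts < N}. gw_weight r (Node ts))"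
    by (subst sum.reindex) (auto simp: inj_on_def)
  also have "\<dots> = (\<Sum>n<N. \<Sum>ts\<in>?L n. gw_weight r (Node ts))"
    unfolding U by (subst sum.UNION_disjoint) (auto simp: fin)
  also have "\<dots> = (\<Sum>n<N. \<Sum>ts\<in>?L n. r n * prod_list (map (gw_weight r) ts))"
    by (intro sum.cong refl) auto
  also have "\<dots> = (\<Sum>n<N. r n * sum (gw_weight r) A ^ n)"
    by (simp add: sum_distrib_left[symmetric] sum_prod_list_lists_length[OF assms])
  finally show ?thesis .
qed

definition children_of :: "ptree set \<Rightarrow> ptree set" where
  "children_of F = (\<Union>t\<in>F. set (children t))"

lemma finite_children_of: "finite F \<Longrightarrow> finite (children_of F)"
  unfolding children_of_def by auto

lemma summable_gf:
  fixes r :: "nat \<Rightarrow> real"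
  assumes "\<And>n. 0 \<le> r n" "summable r" "0 \<le> s" "s \<le> 1"
  shows "summable (\<lambda>n. r n * s ^ n)"
  by (rule summable_comparison_test'[OF assms(2)])
    (use assms in \<open>auto intro!: mult_left_le power_le_one\<close>)

lemma gf_mono:
  fixes r :: "nat \<Rightarrow> real"
  assumes "\<And>n. 0 \<le> r n" "summable r" "0 \<le> a" "a \<le> b" "b \<le> 1"
  shows "(\<Sum>n. r n * a ^ n) \<le> (\<Sum>n. r n * b ^ n)"
  by (rule suminf_le) (use assms in \<open>auto intro!: mult_left_mono power_mono summable_gf\<close>)

lemma sum_gw_weight_le_gf:
  assumes nn: "\<And>n. 0 \<le> r n" and sr: "summable r" and F: "finite F"
    and a0: "0 \<le> sum (gw_weight r) (children_of F)" and a1: "sum (gw_weight r) (children_of F) \<le> 1"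
  shows "sum (gw_weight r) F \<le> (\<Sum>n. r n * sum (gw_weight r) (children_of F) ^ n)"
proof -
  let ?a = "sum (gw_weight r) (children_of F)"
  define N where "N = Suc (Max (insert 0 ((\<lambda>t. length (children t)) ` F)))"
  let ?T = "Node ` {ts. set ts \<subseteq> children_of F \<and> length ts < N}"
  have "F \<subseteq> ?T"
  proof
    fix t assume t: "t \<in> F"
    then have "length (children t) < N"
      using F by (auto simp: N_def less_Suc_eq_le intro!: Max_ge)
    moreover have "set (children t) \<subseteq> children_of F"
      using t by (auto simp: children_of_def)
    ultimately show "t \<in> ?T"
      by (intro image_eqI[of _ _ "children t"]) auto
  qed
  moreover have "finite ?T"
    using finite_lists_length_le[OF finite_children_of[OF F], of N]
    by (intro finite_imageI) (auto elim: finite_subset[rotated])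
  ultimately have "sum (gw_weight r) F \<le> sum (gw_weight r) ?T"
    by (intro sum_mono2) (auto intro: gw_weight_nonneg nn)
  also have "\<dots> = (\<Sum>n<N. r n * ?a ^ n)"
    by (rule sum_gw_weight_Node_lists[OF finite_children_of[OF F]])
  also have "\<dots> \<le> (\<Sum>n. r n * ?a ^ n)"
    by (rule sum_le_suminf) (use nn a0 a1 sr in \<open>auto intro: summable_gf\<close>)
  finally show ?thesis .
qed

definition gw_mass :: "(nat \<Rightarrow> real) \<Rightarrow> real" where
  "gw_mass r = infsum (gw_weight r) UNIV"

context
  fixes r :: "nat \<Rightarrow> real"
  assumes nonneg: "\<And>n. 0 \<le> r n" and summable: "summable r" and suminf_le_1: "suminf r \<le> 1"
begin

lemma sum_gw_weight_le_1:
  assumes "finite F"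
  shows "sum (gw_weight r) F \<le> 1"
proof -
  have "sum (gw_weight r) F \<le> 1" if "finite F" "\<forall>t\<in>F. tsize t \<le> N" for N F
    using that
  proof (induction N arbitrary: F)
    case 0
    then have "F = {}" by (force elim: tsize.elims)
    then show ?case by simp
  next
    case (Suc N)
    let ?a = "sum (gw_weight r) (children_of F)"
    have "\<forall>t\<in>children_of F. tsize t \<le> N"
      using Suc.prems(2) tsize_children_less by (fastforce simp: children_of_def)
    then have a1: "?a \<le> 1"
      using Suc.IH finite_children_of[OF Suc.prems(1)] by blast
    have a0: "0 \<le> ?a"
      by (intro sum_nonneg gw_weight_nonneg nonneg)
    have "sum (gw_weight r) F \<le> (\<Sum>n. r n * ?a ^ n)"
      by (rule sum_gw_weight_le_gf[OF nonneg summable Suc.prems(1) a0 a1])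
    also have "\<dots> \<le> (\<Sum>n. r n * 1 ^ n)"
      by (rule gf_mono[OF nonneg summable a0 a1]) simp
    finally show ?case using suminf_le_1 by simp
  qed
  moreover have "\<forall>t\<in>F. tsize t \<le> Max (tsize ` F)"
    using assms by simp
  ultimately show ?thesis
    using assms by blast
qed

lemma gw_weight_summable: "gw_weight r summable_on UNIV"
  by (rule nonneg_bdd_above_summable_on)
    (use gw_weight_nonneg[OF nonneg] sum_gw_weight_le_1 in \<open>auto simp: bdd_above_def\<close>)

lemma gw_mass_nonneg: "0 \<le> gw_mass r"
  unfolding gw_mass_def by (rule infsum_nonneg) (use gw_weight_nonneg[OF nonneg] in auto)

lemma gw_mass_le_1: "gw_mass r \<le> 1"
  unfolding gw_mass_def
  by (rule infsum_le_finite_sums[OF gw_weight_summable]) (use sum_gw_weight_le_1 in auto)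

lemma sum_gw_weight_le_gw_mass: "finite F \<Longrightarrow> sum (gw_weight r) F \<le> gw_mass r"
  unfolding gw_mass_def
  by (rule finite_sum_le_infsum[OF gw_weight_summable]) (use gw_weight_nonneg[OF nonneg] in auto)

lemma gw_mass_le_gf: "gw_mass r \<le> (\<Sum>n. r n * gw_mass r ^ n)"
  unfolding gw_mass_def[of r]
proof (rule infsum_le_finite_sums[OF gw_weight_summable])
  fix F :: "ptree set"
  assume F: "finite F"
  let ?a = "sum (gw_weight r) (children_of F)"
  have a0: "0 \<le> ?a"
    by (intro sum_nonneg gw_weight_nonneg nonneg)
  have aM: "?a \<le> gw_mass r"
    using sum_gw_weight_le_gw_mass finite_children_of[OF F] by blast
  have "sum (gw_weight r) F \<le> (\<Sum>n. r n * ?a ^ n)"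
    by (rule sum_gw_weight_le_gf[OF nonneg summable F a0]) (use aM gw_mass_le_1 in linarith)
  also have "\<dots> \<le> (\<Sum>n. r n * gw_mass r ^ n)"
    by (rule gf_mono[OF nonneg summable a0 aM gw_mass_le_1])
  finally show "sum (gw_weight r) F \<le> (\<Sum>n. r n * infsum (gw_weight r) UNIV ^ n)"
    unfolding gw_mass_def .
qed

text \<open>Every partial sum of the generating function at \<open>gw_mass r\<close> is a limit of masses of
  finite sets of trees, namely of trees whose root has fewer than \<open>N\<close> children.\<close>
lemma gf_le_gw_mass: "(\<Sum>n. r n * gw_mass r ^ n) \<le> gw_mass r"
proof (rule suminf_le_const)
  show "summable (\<lambda>n. r n * gw_mass r ^ n)"
    by (rule summable_gf[OF nonneg summable gw_mass_nonneg gw_mass_le_1])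
  fix N
  have "(sum (gw_weight r) \<longlongrightarrow> gw_mass r) (finite_subsets_at_top UNIV)"
    using gw_weight_summable by (simp add: gw_mass_def has_sum_def[symmetric])
  then have lim: "((\<lambda>A. \<Sum>n<N. r n * sum (gw_weight r) A ^ n) \<longlongrightarrow> (\<Sum>n<N. r n * gw_mass r ^ n))
      (finite_subsets_at_top UNIV)"
    by (intro tendsto_intros)
  have "\<forall>\<^sub>F A in finite_subsets_at_top UNIV. (\<Sum>n<N. r n * sum (gw_weight r) A ^ n) \<le> gw_mass r"
    unfolding eventually_finite_subsets_at_top
  proof (intro exI[of _ "{}"] conjI allI impI)
    fix A :: "ptree set"
    assume "finite A \<and> {} \<subseteq> A \<and> A \<subseteq> UNIV"
    then have A: "finite A" by simp
    have "finite {ts. set ts \<subseteq> A \<and> length ts < N}"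
      using finite_lists_length_le[OF A, of N] by (auto elim: finite_subset[rotated])
    then show "(\<Sum>n<N. r n * sum (gw_weight r) A ^ n) \<le> gw_mass r"
      by (auto simp: sum_gw_weight_Node_lists[OF A, symmetric] intro!: sum_gw_weight_le_gw_mass)
  qed simp_all
  then show "(\<Sum>n<N. r n * gw_mass r ^ n) \<le> gw_mass r"
    by (rule tendsto_upperbound[OF lim]) simp
qed

lemma gw_mass_fixed_point: "gw_mass r = (\<Sum>n. r n * gw_mass r ^ n)"
  using gw_mass_le_gf gf_le_gw_mass by linarith

end

lemma gt_maxdeg_Node_iff:
  "x < real (maxdeg (Node ts)) \<longleftrightarrow> x < real (length ts) \<or> (\<exists>c\<in>set ts. x < real (maxdeg c))"
proof -
  let ?A = "insert (length ts) (maxdeg ` set ts)"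
  have "real (Max ?A) = Max (real ` ?A)"
    by (rule mono_Max_commute) (auto simp: mono_def)
  then show ?thesis by (simp add: Max_gr_iff del: Max_insert)
qed

lemma gw_weight_truncate:
  "gw_weight (\<lambda>n. if real n > x then 0 else p n) t = (if real (maxdeg t) > x then 0 else gw_weight p t)"
proof (induction t)
  case (Node ts)
  let ?p = "\<lambda>n. if real n > x then 0 else p n"
  show ?case
  proof (cases "x < real (length ts)")
    case True
    then show ?thesis by (simp add: gt_maxdeg_Node_iff del: maxdeg.simps)
  next
    case False
    have "gw_weight ?p (Node ts) = p (length ts)
        * prod_list (map (\<lambda>c. if real (maxdeg c) > x then 0 else gw_weight p c) ts)"
      using False Node.IH by (simp cong: map_cong)
    also have "\<dots> = (if real (maxdeg (Node ts)) > x then 0 else gw_weight p (Node ts))"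
      using False by (auto simp: gt_maxdeg_Node_iff prod_list_zero_iff simp del: maxdeg.simps cong: map_cong)
    finally show ?thesis .
  qed
qed

section \<open>The generating function near 1\<close>

text \<open>The second-order remainder \<open>((1 - q)\<^sup>n - 1 + n q) / q\<^sup>2\<close> of \<open>s\<^sup>n\<close> at \<open>s = 1\<close>, written
  as a polynomial so that no division by \<open>q\<close> occurs.\<close>
definition sq_remainder :: "nat \<Rightarrow> real \<Rightarrow> real" where
  "sq_remainder n q = (\<Sum>m<n. \<Sum>i<m. (1 - q) ^ i)"

lemma sq_remainder_eq: "q\<^sup>2 * sq_remainder n q = (1 - q) ^ n - 1 + real n * q"
proof (induction n)
  case 0
  then show ?case by (simp add: sq_remainder_def)
next
  case (Suc n)
  have "q\<^sup>2 * sq_remainder (Suc n) q = q\<^sup>2 * sq_remainder n q + q * (q * (\<Sum>i<n. (1 - q) ^ i))"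
    by (simp add: sq_remainder_def algebra_simps power2_eq_square)
  also have "q * (\<Sum>i<n. (1 - q) ^ i) = 1 - (1 - q) ^ n"
    using one_diff_power_eq[of "1 - q" n] by simp
  finally show ?case using Suc by (simp add: algebra_simps)
qed

lemma sq_remainder_nonneg: "q \<le> 1 \<Longrightarrow> 0 \<le> sq_remainder n q"
  unfolding sq_remainder_def by (intro sum_nonneg) auto

lemma sq_remainder_le:
  assumes "0 \<le> q" "q \<le> 1"
  shows "sq_remainder n q \<le> (real n)\<^sup>2"
proof -
  have "sq_remainder n q \<le> (\<Sum>m<n. \<Sum>i<m. (1::real))"
    unfolding sq_remainder_def using assms by (intro sum_mono power_le_one) auto
  also have "\<dots> \<le> (\<Sum>m<n. real n)"
    by (intro sum_mono) auto
  finally show ?thesis by (simp add: power2_eq_square)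
qed

lemma sq_remainder_at_0: "2 * sq_remainder n 0 = (real n)\<^sup>2 - real n"
proof (induction n)
  case 0
  then show ?case by (simp add: sq_remainder_def)
next
  case (Suc n)
  have "sq_remainder (Suc n) 0 = sq_remainder n 0 + real n"
    by (simp add: sq_remainder_def)
  then show ?case using Suc by (simp add: algebra_simps power2_eq_square)
qed

lemma one_le_sq_remainder:
  assumes "2 \<le> n" "q \<le> 1"
  shows "1 \<le> sq_remainder n q"
proof -
  have "sq_remainder 2 q \<le> sq_remainder n q"
    unfolding sq_remainder_def using assms by (intro sum_mono2) (auto intro!: sum_nonneg)
  then show ?thesis by (simp add: sq_remainder_def numeral_2_eq_2)
qed

lemma summable_restrict:
  fixes g :: "nat \<Rightarrow> real"
  shows "(\<And>n. 0 \<le> g n) \<Longrightarrow> summable g \<Longrightarrow> summable (\<lambda>n. if P n then g n else 0)"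
  by (rule summable_comparison_test'[of g]) auto

lemma tail_suminf_tendsto_0:
  fixes g :: "nat \<Rightarrow> real"
  assumes nonneg: "\<And>n. 0 \<le> g n" and summable: "summable g"
  shows "((\<lambda>x::real. \<Sum>n. if real n > x then g n else 0) \<longlongrightarrow> 0) at_top"
proof (rule tendstoI)
  fix e :: real
  assume "0 < e"
  then obtain N where N: "norm (\<Sum>i. g (i + N)) < e"
    using suminf_exist_split[OF _ summable] by blast
  let ?h = "\<lambda>n. if n \<ge> N then g n else 0"
  have sh: "summable ?h"
    by (rule summable_restrict[OF nonneg summable])
  have "suminf ?h = (\<Sum>i. g (i + N))"
    using sums_zero_iff_shift[of N ?h "suminf ?h"] sh by (simp add: summable_sums sums_iff)
  show "\<forall>\<^sub>F x in at_top. dist (\<Sum>n. if real n > x then g n else 0) 0 < e"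
  proof (rule eventually_at_top_linorderI[of "real N"])
    fix x
    assume x: "real N \<le> x"
    have "0 \<le> (\<Sum>n. if real n > x then g n else 0)"
      by (rule suminf_nonneg[OF summable_restrict[OF nonneg summable]]) (use nonneg in auto)
    moreover have "(\<Sum>n. if real n > x then g n else 0) \<le> suminf ?h"
      by (rule suminf_le[OF _ summable_restrict[OF nonneg summable] sh]) (use nonneg x in auto)
    ultimately show "dist (\<Sum>n. if real n > x then g n else 0) 0 < e"
      using N \<open>suminf ?h = _\<close> by simp
  qed
qed

lemma tendsto_0_by_sq_bound:
  fixes f g :: "'a \<Rightarrow> real"
  assumes lim: "(g \<longlongrightarrow> 0) F" and c: "0 < c"
    and bound: "\<forall>\<^sub>F x in F. 0 \<le> f x \<and> c * (f x)\<^sup>2 \<le> g x"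
  shows "(f \<longlongrightarrow> 0) F"
proof (rule tendsto_sandwich[of "\<lambda>_. 0" f F "\<lambda>x. sqrt (g x / c)"])
  show "\<forall>\<^sub>F x in F. 0 \<le> f x"
    using bound by (rule eventually_mono) simp
  show "\<forall>\<^sub>F x in F. f x \<le> sqrt (g x / c)"
    using bound by (rule eventually_mono) (use c in \<open>auto intro: real_le_rsqrt simp: pos_le_divide_eq mult.commute\<close>)
  have "((\<lambda>x. sqrt (g x / c)) \<longlongrightarrow> sqrt (0 / c)) F"
    by (intro tendsto_intros lim) (use c in simp)
  then show "((\<lambda>x. sqrt (g x / c)) \<longlongrightarrow> 0) F"
    by simp
qed simp

lemma sq_mult_tail_suminf_le:
  fixes g :: "nat \<Rightarrow> real"
  assumes nonneg: "\<And>n. 0 \<le> g n" and "summable g" and "summable (\<lambda>n. (real n)\<^sup>2 * g n)"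
    and x: "0 \<le> x"
  shows "x\<^sup>2 * (\<Sum>n. if real n > x then g n else 0) \<le> (\<Sum>n. if real n > x then (real n)\<^sup>2 * g n else 0)"
  using assms
  by (subst suminf_mult[symmetric]) (auto intro!: suminf_le summable_restrict
      mult_right_mono power_mono)

section \<open>Critical laws\<close>

locale critical_law =
  fixes p :: "nat \<Rightarrow> real"
  assumes nonneg: "\<And>n. p n \<ge> 0"
    and prob: "p sums 1"
    and critical: "(\<lambda>n. real n * p n) sums 1"
    and nondeg: "p \<noteq> (\<lambda>n. if n = 1 then 1 else 0)"
    and fin_var: "summable (\<lambda>n. (real n)\<^sup>2 * p n)"
begin

lemma summable: "summable p"
  using prob by (rule sums_summable)

lemma suminf_eq_1: "suminf p = 1"
  using prob by (simp add: sums_iff)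

lemma exists_offspring_ge_2: "\<exists>n\<ge>2. 0 < p n"
proof (rule ccontr)
  assume "\<not> ?thesis"
  then have zero: "\<And>n. n \<ge> 2 \<Longrightarrow> p n = 0"
    using nonneg by (meson le_less not_le)
  have "p sums (\<Sum>n<2. p n)"
    by (rule sums_finite) (auto simp: zero)
  then have mass: "p 0 + p 1 = 1"
    using prob sums_unique2 by (simp add: numeral_2_eq_2)
  have "(\<lambda>n. real n * p n) sums (\<Sum>n<2. real n * p n)"
    by (rule sums_finite) (auto simp: zero)
  then have mean: "p 1 = 1"
    using critical sums_unique2 by (simp add: numeral_2_eq_2)
  have "p n = (if n = 1 then 1 else 0)" for n
    using mass mean zero[of n] by (cases "n < 2") (auto simp: less_2_cases_iff)
  then show False
    using nondeg by auto
qed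

definition sigma2 :: real where
  "sigma2 = (\<Sum>n. (real n)\<^sup>2 * p n) - 1"

definition defect_quot :: "real \<Rightarrow> real" where
  "defect_quot q = (\<Sum>n. p n * sq_remainder n q)"

lemma summable_defect_quot:
  assumes "0 \<le> q" "q \<le> 1"
  shows "summable (\<lambda>n. p n * sq_remainder n q)"
  by (rule summable_comparison_test'[OF fin_var])
    (use assms nonneg sq_remainder_nonneg sq_remainder_le in
      \<open>auto simp: abs_mult mult.commute intro!: mult_left_mono\<close>)

lemma defect_quot_lower_bound: "\<exists>c>0. \<forall>q\<in>{0..1}. c \<le> defect_quot q"
proof -
  obtain m where m: "2 \<le> m" "0 < p m"
    using exists_offspring_ge_2 by blast
  have "p m \<le> defect_quot q" if "0 \<le> q" "q \<le> 1" for q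
  proof -
    have "p m \<le> p m * sq_remainder m q"
      using one_le_sq_remainder[OF m(1) that(2)] m(2) by simp
    also have "\<dots> = (\<Sum>n\<in>{m}. p n * sq_remainder n q)"
      by simp
    also have "\<dots> \<le> defect_quot q"
      unfolding defect_quot_def
      by (rule sum_le_suminf[OF summable_defect_quot[OF that]])
        (use nonneg sq_remainder_nonneg that in auto)
    finally show ?thesis .
  qed
  then show ?thesis
    using m(2) by auto
qed

lemma defect_quot_pos: "0 \<le> q \<Longrightarrow> q \<le> 1 \<Longrightarrow> 0 < defect_quot q"
  using defect_quot_lower_bound by force

lemma continuous_on_defect_quot: "continuous_on {0..1} defect_quot"
proof -
  have "uniform_limit {0..1} (\<lambda>N q. \<Sum>n<N. p n * sq_remainder n q) defect_quot sequentially"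
    unfolding defect_quot_def[abs_def]
    by (rule Weierstrass_m_test[OF _ fin_var])
      (use nonneg sq_remainder_nonneg sq_remainder_le in
        \<open>auto simp: abs_mult mult.commute intro!: mult_left_mono\<close>)
  then show ?thesis
    by (rule uniform_limit_theorem[rotated])
      (auto simp: sq_remainder_def intro!: always_eventually continuous_intros)
qed

lemma defect_quot_at_0: "defect_quot 0 = sigma2 / 2"
proof -
  have "(\<lambda>n. ((real n)\<^sup>2 * p n - real n * p n) / 2) sums (sigma2 / 2)"
    unfolding sigma2_def by (intro sums_divide sums_diff critical summable_sums fin_var)
  moreover have "(\<lambda>n. ((real n)\<^sup>2 * p n - real n * p n) / 2) = (\<lambda>n. p n * sq_remainder n 0)"
  proof
    fix n
    have "(real n)\<^sup>2 = 2 * sq_remainder n 0 + real n"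
      using sq_remainder_at_0[of n] by simp
    then show "((real n)\<^sup>2 * p n - real n * p n) / 2 = p n * sq_remainder n 0"
      by (simp add: algebra_simps)
  qed
  ultimately show ?thesis
    unfolding defect_quot_def by (simp add: sums_iff)
qed

lemma sigma2_pos: "0 < sigma2"
  using defect_quot_pos[of 0] defect_quot_at_0 by simp

lemma gf_minus_id_eq:
  assumes "0 \<le> s" "s \<le> 1"
  shows "(\<Sum>n. p n * s ^ n) - s = (1 - s)\<^sup>2 * defect_quot (1 - s)"
proof -
  have "(\<lambda>n. p n * s ^ n - p n + (1 - s) * (real n * p n)) sums ((\<Sum>n. p n * s ^ n) - 1 + (1 - s) * 1)"
    by (intro sums_add sums_diff sums_mult critical prob summable_sums summable_gf
        nonneg summable assms)
  moreover have "(\<lambda>n. (1 - s)\<^sup>2 * (p n * sq_remainder n (1 - s))) sums ((1 - s)\<^sup>2 * defect_quot (1 - s))"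
    unfolding defect_quot_def
    by (intro sums_mult summable_sums summable_defect_quot) (use assms in auto)
  moreover have "p n * s ^ n - p n + (1 - s) * (real n * p n) = (1 - s)\<^sup>2 * (p n * sq_remainder n (1 - s))"
    for n
  proof -
    have "(1 - s)\<^sup>2 * (p n * sq_remainder n (1 - s)) = p n * ((1 - s)\<^sup>2 * sq_remainder n (1 - s))"
      by simp
    also have "\<dots> = p n * (s ^ n - 1 + real n * (1 - s))"
      by (simp only: sq_remainder_eq) simp
    finally show ?thesis
      by (simp add: algebra_simps)
  qed
  ultimately show ?thesis
    using sums_unique2 by fastforce
qed

text \<open>The critical tree is almost surely finite: \<open>f(s) > s\<close> on \<open>[0, 1)\<close>.\<close>
lemma gw_mass_eq_1: "gw_mass p = 1"
proof -
  have ok: "\<And>n. 0 \<le> p n" "summable p" "suminf p \<le> 1"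
    using nonneg summable suminf_eq_1 by auto
  have "(1 - gw_mass p)\<^sup>2 * defect_quot (1 - gw_mass p) = 0"
    using gf_minus_id_eq[OF gw_mass_nonneg[OF ok] gw_mass_le_1[OF ok]] gw_mass_fixed_point[OF ok]
    by simp
  moreover have "0 < defect_quot (1 - gw_mass p)"
    using gw_mass_nonneg[OF ok] gw_mass_le_1[OF ok] by (intro defect_quot_pos) simp_all
  ultimately show ?thesis
    by simp
qed

abbreviation Q :: "real \<Rightarrow> real" where
  "Q \<equiv> max_offspring_tail p"

definition truncated :: "real \<Rightarrow> nat \<Rightarrow> real" where
  "truncated x n = (if real n > x then 0 else p n)"

lemma truncated_law: "0 \<le> truncated x n" "summable (truncated x)" "suminf (truncated x) \<le> 1"
proof -
  show nonneg_trunc: "0 \<le> truncated x n" for n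
    using nonneg by (simp add: truncated_def)
  show summable_trunc: "summable (truncated x)"
    unfolding truncated_def by (rule summable_comparison_test'[OF summable]) (use nonneg in auto)
  have "suminf (truncated x) \<le> suminf p"
    by (rule suminf_le[OF _ summable_trunc summable]) (use nonneg in \<open>auto simp: truncated_def\<close>)
  then show "suminf (truncated x) \<le> 1"
    using suminf_eq_1 by simp
qed

lemma max_offspring_tail_eq: "Q x = 1 - gw_mass (truncated x)"
proof -
  let ?A = "\<lambda>t. if real (maxdeg t) > x then gw_weight p t else 0"
  have sA: "?A summable_on UNIV"
    by (rule summable_on_comparison_test[OF gw_weight_summable[OF nonneg summable]])
      (use gw_weight_nonneg[OF nonneg] suminf_eq_1 in auto)
  have "gw_weight p = (\<lambda>t. ?A t + gw_weight (truncated x) t)"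
    by (rule ext) (simp add: truncated_def[abs_def] gw_weight_truncate)
  then have "gw_mass p = infsum ?A UNIV + gw_mass (truncated x)"
    unfolding gw_mass_def by (metis infsum_add[OF sA gw_weight_summable[OF truncated_law]])
  then show ?thesis
    using gw_mass_eq_1 by (simp add: max_offspring_tail_def)
qed

lemma max_offspring_tail_bounds: "0 \<le> Q x" "Q x \<le> 1"
  using gw_mass_nonneg[OF truncated_law] gw_mass_le_1[OF truncated_law]
  by (auto simp: max_offspring_tail_eq)

definition tail_gf :: "real \<Rightarrow> real" where
  "tail_gf x = (\<Sum>n. if real n > x then p n * (1 - Q x) ^ n else 0)"

lemma summable_tail_gf: "summable (\<lambda>n. if real n > x then p n * (1 - Q x) ^ n else 0)"
  using max_offspring_tail_bounds[of x]
  by (intro summable_restrict summable_gf nonneg summable) (auto simp: nonneg)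

lemma summable_Fbar: "summable (\<lambda>n. if real n > x then p n else 0)"
  by (rule summable_restrict[OF nonneg summable])

lemma tail_gf_le_Fbar: "tail_gf x \<le> Fbar p x"
  unfolding tail_gf_def Fbar_def
proof (rule suminf_le[OF _ summable_tail_gf summable_Fbar])
  fix n
  have "0 \<le> 1 - Q x" "1 - Q x \<le> 1"
    using max_offspring_tail_bounds[of x] by auto
  then show "(if real n > x then p n * (1 - Q x) ^ n else 0) \<le> (if real n > x then p n else 0)"
    using nonneg[of n] by (auto intro!: mult_left_le power_le_one)
qed

text \<open>The fixed-point equation of the truncated law, rewritten with \<open>gf_minus_id_eq\<close>.\<close>
lemma max_offspring_tail_sq_defect_quot: "(Q x)\<^sup>2 * defect_quot (Q x) = tail_gf x"
proof -
  let ?W = "gw_mass (truncated x)"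
  have W: "0 \<le> ?W" "?W \<le> 1"
    using gw_mass_nonneg[OF truncated_law] gw_mass_le_1[OF truncated_law] by auto
  have W_eq: "1 - Q x = ?W"
    using max_offspring_tail_eq[of x] by simp
  have "(\<Sum>n. p n * ?W ^ n) = (\<Sum>n. truncated x n * ?W ^ n + (if real n > x then p n * ?W ^ n else 0))"
    by (rule suminf_cong) (simp add: truncated_def)
  also have "\<dots> = (\<Sum>n. truncated x n * ?W ^ n) + tail_gf x"
    using suminf_add[OF summable_gf[OF truncated_law(1,2)[of x] W] summable_tail_gf[of x]]
    unfolding tail_gf_def W_eq by simp
  also have "\<dots> = ?W + tail_gf x"
    using gw_mass_fixed_point[OF truncated_law, of x] by simp
  finally show ?thesis
    using gf_minus_id_eq[OF W] by (simp add: max_offspring_tail_eq)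
qed

lemma sq_max_offspring_tail_le: "\<exists>c>0. \<forall>x. c * (Q x)\<^sup>2 \<le> Fbar p x"
proof -
  obtain c where c: "0 < c" "\<And>q. 0 \<le> q \<Longrightarrow> q \<le> 1 \<Longrightarrow> c \<le> defect_quot q"
    using defect_quot_lower_bound by auto
  have "c * (Q x)\<^sup>2 \<le> Fbar p x" for x
  proof -
    have "c * (Q x)\<^sup>2 \<le> (Q x)\<^sup>2 * defect_quot (Q x)"
      using mult_right_mono[OF c(2)[OF max_offspring_tail_bounds] zero_le_power2[of "Q x"]]
      by (simp add: mult.commute)
    then show ?thesis
      using max_offspring_tail_sq_defect_quot[of x] tail_gf_le_Fbar[of x] by linarith
  qed
  with c(1) show ?thesis
    by blast
qed

lemma max_offspring_tail_tendsto_0: "(Q \<longlongrightarrow> 0) at_top"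
proof -
  obtain c where c: "0 < c" "\<And>x. c * (Q x)\<^sup>2 \<le> Fbar p x"
    using sq_max_offspring_tail_le by auto
  have lim: "(Fbar p \<longlongrightarrow> 0) at_top"
    unfolding Fbar_def[abs_def] by (rule tail_suminf_tendsto_0[OF nonneg summable])
  have "\<forall>\<^sub>F x in at_top. 0 \<le> Q x \<and> c * (Q x)\<^sup>2 \<le> Fbar p x"
    using c(2) max_offspring_tail_bounds by simp
  then show ?thesis
    by (rule tendsto_0_by_sq_bound[OF lim c(1)])
qed

text \<open>This is where the finite variance enters: \<open>x\<^sup>2 F(x)\<close> is dominated by the tail of the
  second moment.\<close>
lemma max_offspring_tail_mult_tendsto_0: "((\<lambda>x. Q x * x) \<longlongrightarrow> 0) at_top"
proof -
  obtain c where c: "0 < c" "\<And>x. c * (Q x)\<^sup>2 \<le> Fbar p x"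
    using sq_max_offspring_tail_le by auto
  let ?T = "\<lambda>x. \<Sum>n. if real n > x then (real n)\<^sup>2 * p n else 0"
  have "c * (Q x * x)\<^sup>2 \<le> ?T x" if "0 \<le> x" for x
  proof -
    have "c * (Q x * x)\<^sup>2 = x\<^sup>2 * (c * (Q x)\<^sup>2)"
      by (simp add: algebra_simps power2_eq_square)
    also have "\<dots> \<le> x\<^sup>2 * Fbar p x"
      using c(2) by (rule mult_left_mono) simp
    also have "\<dots> \<le> ?T x"
      unfolding Fbar_def by (rule sq_mult_tail_suminf_le[OF nonneg summable fin_var that])
    finally show ?thesis .
  qed
  then have bound: "\<forall>\<^sub>F x in at_top. 0 \<le> Q x * x \<and> c * (Q x * x)\<^sup>2 \<le> ?T x"
    using max_offspring_tail_bounds by (intro eventually_at_top_linorderI[of 0]) simp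
  have "(?T \<longlongrightarrow> 0) at_top"
    by (rule tail_suminf_tendsto_0[OF _ fin_var]) (simp add: nonneg)
  then show ?thesis
    by (rule tendsto_0_by_sq_bound[OF _ c(1) bound])
qed

lemma defect_quot_max_offspring_tail_tendsto: "((\<lambda>x. defect_quot (Q x)) \<longlongrightarrow> sigma2 / 2) at_top"
  unfolding defect_quot_at_0[symmetric]
  by (rule continuous_on_tendsto_compose[OF continuous_on_defect_quot max_offspring_tail_tendsto_0])
    (use max_offspring_tail_bounds in auto)

lemma tail_gf_lower_bound:
  assumes x: "0 < x" and y: "1 \<le> y"
  shows "(1 - Q x * x * y) * (Fbar p x - Fbar p (x * y)) \<le> tail_gf x"
proof -
  let ?b = "1 - Q x * x * y"
  let ?D = "\<lambda>n. if x < real n \<and> real n \<le> x * y then p n else 0"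
  have "x \<le> x * y"
    using x y by simp
  have "Fbar p x - Fbar p (x * y) = (\<Sum>n. (if real n > x then p n else 0) - (if real n > x * y then p n else 0))"
    unfolding Fbar_def by (rule suminf_diff[OF summable_Fbar summable_Fbar])
  also have "\<dots> = suminf ?D"
    by (rule suminf_cong) (use \<open>x \<le> x * y\<close> in auto)
  finally have "?b * (Fbar p x - Fbar p (x * y)) = (\<Sum>n. ?D n * ?b)"
    by (simp only: mult.commute[of ?b] suminf_mult2[OF summable_restrict[OF nonneg summable]])
  also have "\<dots> \<le> tail_gf x"
    unfolding tail_gf_def
  proof (rule suminf_le[OF _ _ summable_tail_gf])
    show "summable (\<lambda>n. ?D n * ?b)"
      by (intro summable_mult2 summable_restrict nonneg summable)
    fix n
    have Q: "0 \<le> Q x" "0 \<le> 1 - Q x"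
      using max_offspring_tail_bounds[of x] by auto
    show "?D n * ?b \<le> (if real n > x then p n * (1 - Q x) ^ n else 0)"
    proof (cases "x < real n \<and> real n \<le> x * y")
      case True
      have "1 - real n * Q x \<le> (1 - Q x) ^ n"
        using Bernoulli_inequality[of "- Q x" n] Q by simp
      moreover have "real n * Q x \<le> Q x * x * y"
        using mult_right_mono[of "real n" "x * y" "Q x"] True Q by (simp add: mult_ac)
      ultimately have "?b \<le> (1 - Q x) ^ n"
        by linarith
      then show ?thesis
        using True nonneg[of n] by (simp add: mult.commute mult_left_mono)
    next
      case False
      then show ?thesis
        using nonneg[of n] Q by simp
    qed
  qed
  finally show ?thesis .
qed

lemma tail_gf_div_Fbar_tendsto_1:
  assumes tail_pos: "\<And>x. x > 0 \<Longrightarrow> Fbar p x > 0"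
    and tail_cond: "((\<lambda>y. Limsup at_top (\<lambda>x. ereal (Fbar p (x * y) / Fbar p x))) \<longlongrightarrow> 0) at_top"
  shows "((\<lambda>x. tail_gf x / Fbar p x) \<longlongrightarrow> 1) at_top"
proof (rule order_tendstoI)
  fix a :: real
  assume "1 < a"
  show "\<forall>\<^sub>F x in at_top. tail_gf x / Fbar p x < a"
  proof (rule eventually_at_top_linorderI[of 1])
    fix x :: real
    assume "1 \<le> x"
    then have "tail_gf x / Fbar p x \<le> 1"
      using tail_pos[of x] tail_gf_le_Fbar[of x] by simp
    then show "tail_gf x / Fbar p x < a"
      using \<open>1 < a\<close> by linarith
  qed
next
  fix a :: real
  assume "a < 1"
  define e where "e = (1 - a) / 2"
  have e: "0 < e" "a = 1 - 2 * e"
    using \<open>a < 1\<close> by (auto simp: e_def field_simps)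
  have "\<forall>\<^sub>F y in at_top. Limsup at_top (\<lambda>x. ereal (Fbar p (x * y) / Fbar p x)) < ereal e \<and> 1 \<le> y"
    using order_tendstoD(2)[OF tail_cond, of "ereal e"] e(1) eventually_ge_at_top[of "1::real"]
    by (simp add: eventually_conj)
  then obtain y where y: "Limsup at_top (\<lambda>x. ereal (Fbar p (x * y) / Fbar p x)) < ereal e" "1 \<le> y"
    by (auto simp: eventually_at_top_linorder)
  have ev_ratio: "\<forall>\<^sub>F x in at_top. Fbar p (x * y) / Fbar p x < e"
    using Limsup_lessD[OF y(1)] by simp
  have "((\<lambda>x. Q x * x * y) \<longlongrightarrow> 0 * y) at_top"
    by (intro tendsto_intros max_offspring_tail_mult_tendsto_0)
  then have ev_Q: "\<forall>\<^sub>F x in at_top. Q x * x * y < e"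
    using e(1) by (simp add: order_tendstoD(2))
  show "\<forall>\<^sub>F x in at_top. a < tail_gf x / Fbar p x"
    using ev_ratio ev_Q eventually_ge_at_top[of "1::real"]
  proof eventually_elim
    case (elim x)
    let ?b = "Q x * x * y" and ?r = "Fbar p (x * y) / Fbar p x"
    have F: "0 < Fbar p x" "0 < Fbar p (x * y)"
      using elim(3) y(2) tail_pos by auto
    have "0 \<le> ?b * ?r"
      using max_offspring_tail_bounds[of x] elim(3) y(2) F by simp
    moreover have "(1 - ?b) * (1 - ?r) = 1 - ?b - ?r + ?b * ?r"
      by (simp add: algebra_simps diff_divide_distrib)
    ultimately have "1 - ?b - ?r \<le> (1 - ?b) * (1 - ?r)"
      by linarith
    also have "\<dots> = (1 - ?b) * (Fbar p x - Fbar p (x * y)) / Fbar p x"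
      using F by (simp add: field_simps)
    also have "\<dots> \<le> tail_gf x / Fbar p x"
      by (intro divide_right_mono tail_gf_lower_bound) (use elim y(2) F in auto)
    finally show ?case
      using elim e by linarith
  qed
qed

theorem max_offspring_tail_asymp_equiv:
  assumes tail_pos: "\<And>x. x > 0 \<Longrightarrow> Fbar p x > 0"
    and tail_cond: "((\<lambda>y. Limsup at_top (\<lambda>x. ereal (Fbar p (x * y) / Fbar p x))) \<longlongrightarrow> 0) at_top"
  shows "Q \<sim>[at_top] (\<lambda>x. sqrt (2 * Fbar p x / sigma2))"
proof (rule asymp_equivI')
  let ?G = "\<lambda>x. tail_gf x / Fbar p x * (sigma2 / 2) / defect_quot (Q x)"
  have "sigma2 / 2 \<noteq> 0"
    using sigma2_pos by simp
  then have "(?G \<longlongrightarrow> 1 * (sigma2 / 2) / (sigma2 / 2)) at_top"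
    by (intro tendsto_intros tail_gf_div_Fbar_tendsto_1[OF assms] defect_quot_max_offspring_tail_tendsto)
  then have "((\<lambda>x. sqrt (?G x)) \<longlongrightarrow> sqrt 1) at_top"
    using sigma2_pos by (intro tendsto_real_sqrt) simp
  moreover have "\<forall>\<^sub>F x in at_top. sqrt (?G x) = Q x / sqrt (2 * Fbar p x / sigma2)"
  proof (rule eventually_at_top_linorderI[of 1])
    fix x :: real
    assume "1 \<le> x"
    then have F: "0 < Fbar p x"
      using tail_pos by simp
    have D: "0 < defect_quot (Q x)"
      by (rule defect_quot_pos[OF max_offspring_tail_bounds])
    have Q_eq: "sqrt (tail_gf x / defect_quot (Q x)) = Q x"
      using max_offspring_tail_sq_defect_quot[of x] D max_offspring_tail_bounds[of x]
      by (auto intro: real_sqrt_unique simp: field_simps)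
    have G_eq: "?G x = (tail_gf x / defect_quot (Q x)) / (2 * Fbar p x / sigma2)"
      using F D sigma2_pos by (simp add: field_simps)
    show "sqrt (?G x) = Q x / sqrt (2 * Fbar p x / sigma2)"
      unfolding G_eq real_sqrt_divide[of "tail_gf x / defect_quot (Q x)"] Q_eq ..
  qed
  ultimately show "((\<lambda>x. Q x / sqrt (2 * Fbar p x / sigma2)) \<longlongrightarrow> 1) at_top"
    by (simp add: Lim_transform_eventually)
qed

end

theorem lemma1:
  fixes p :: "nat \<Rightarrow> real"
  assumes nonneg: "\<And>n. p n \<ge> 0"
    and prob: "p sums 1"
    and critical: "(\<lambda>n. real n * p n) sums 1"
    and nondeg: "p \<noteq> (\<lambda>n. if n = 1 then 1 else 0)"
    and fin_var: "summable (\<lambda>n. (real n)\<^sup>2 * p n)"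
    and tail_pos: "\<And>x. x > 0 \<Longrightarrow> Fbar p x > 0"
    and tail_cond: "((\<lambda>y. Limsup at_top (\<lambda>x. ereal (Fbar p (x * y) / Fbar p x))) \<longlongrightarrow> 0) at_top"
  shows "(\<lambda>x. max_offspring_tail p x) \<sim>[at_top]
           (\<lambda>x. sqrt (2 * Fbar p x / ((\<Sum>n. (real n)\<^sup>2 * p n) - 1)))"
proof -
  interpret critical_law p
    by (rule critical_law.intro[OF nonneg prob critical nondeg fin_var])
  show ?thesis
    using max_offspring_tail_asymp_equiv[OF tail_pos tail_cond] by (simp add: sigma2_def)
qed

end
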